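(* Let $x,y\in\{a,b\}^*$ be two different words and let $\omega=xy^{-1}\in\mathbf{F}_2$. Then the pair $(x,y)$ can be separated exactly by a 2-state MCQFA (with complex amplitudes) if and only if the image of the word map $f_\omega: SU(2)\times SU(2)\to SU(2)$ contains the matrix $\begin{pmatrix} i & 0\\ 0 & -i\end{pmatrix}$.
   Context: $\mathbf{F}_2$ is the free group on generators $a,b$, i.e. reduced words over $\{a,b,a^{-1},b^{-1}\}$ with concatenation. For a group $G$ and $\omega\in\mathbf{F}_2$, the word map $f_\omega:G\times G\to G$ sends $(g,h)$ to the element obtained from $\omega$ by substituting $g$ for $a$ and $h$ for $b$ (and $g^{-1},h^{-1}$ for $a^{-1},b^{-1}$). $SU(2)$ is the group of $2\times 2$ complex unitary matrices of determinant $1$. A 2-state Moore–Crutchfield quantum finite automaton (MCQFA) over $\{a,b\}$ consists of unitaries $U_a,U_b\in\mathbb{C}^{2\times 2}$, an initial unit vector $|u_0\rangle\in\mathbb{C}^2$ and a set of accepting basis states; on input $w=w_1\cdots w_k$ the final state is $U_{w_k}\cdots U_{w_1}|u_0\rangle$ and the acceptance probability is the sum of the squared moduli of its accepting coordinates. The pair $(x,y)$ is separated exactly if one word is accepted with probability $1$ and the other with probability $0$. *)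

theory Defs
  imports "HOL-Analysis.Analysis"
begin

datatype gen = GA | GB

type_synonym pword = "gen list"

text \<open>Letters of F_2: a generator with an exponent sign (True = +1, False = -1).
  Elements of F_2 are reduced words of such letters.\<close>
type_synonym letter = "gen \<times> bool"

definition inv_letter :: "letter \<Rightarrow> letter" where
  "inv_letter l = (fst l, \<not> snd l)"

fun reduced :: "letter list \<Rightarrow> bool" where
  "reduced (l1 # l2 # ls) = (l2 \<noteq> inv_letter l1 \<and> reduced (l2 # ls))"
| "reduced _ = True"

fun cons_red :: "letter \<Rightarrow> letter list \<Rightarrow> letter list" where
  "cons_red l [] = [l]"
| "cons_red l (m # ms) = (if m = inv_letter l then ms else l # m # ms)"

definition reduce :: "letter list \<Rightarrow> letter list" where
  "reduce ls = foldr cons_red ls []"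

definition F2 :: "letter list set" where
  "F2 = {w. reduced w}"

definition f2_mult :: "letter list \<Rightarrow> letter list \<Rightarrow> letter list" where
  "f2_mult u v = reduce (u @ v)"

definition f2_inv :: "letter list \<Rightarrow> letter list" where
  "f2_inv u = rev (map inv_letter u)"

definition embed_word :: "pword \<Rightarrow> letter list" where
  "embed_word x = map (\<lambda>g. (g, True)) x"

definition omega :: "pword \<Rightarrow> pword \<Rightarrow> letter list" where
  "omega x y = f2_mult (embed_word x) (f2_inv (embed_word y))"

type_synonym cmat = "complex ^ 2 ^ 2"
type_synonym cvec = "complex ^ 2"

definition adjoint_mat :: "cmat \<Rightarrow> cmat" where
  "adjoint_mat A = (\<chi> i j. cnj (A $ j $ i))"

definition unitary2 :: "cmat \<Rightarrow> bool" where
  "unitary2 U \<longleftrightarrow> U ** adjoint_mat U = mat 1 \<and> adjoint_mat U ** U = mat 1"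

definition SU2 :: "cmat set" where
  "SU2 = {U. unitary2 U \<and> det U = 1}"

definition letter_val :: "cmat \<Rightarrow> cmat \<Rightarrow> letter \<Rightarrow> cmat" where
  "letter_val g h l =
     (let M = (case fst l of GA \<Rightarrow> g | GB \<Rightarrow> h) in if snd l then M else matrix_inv M)"

definition word_map :: "letter list \<Rightarrow> cmat \<Rightarrow> cmat \<Rightarrow> cmat" where
  "word_map w g h = foldr (\<lambda>l M. letter_val g h l ** M) w (mat 1)"

definition diag_i :: cmat where
  "diag_i = (\<chi> i j. if i = j then (if i = 1 then \<i> else - \<i>) else 0)"

record mcqfa =
  Ua :: cmat
  Ub :: cmat
  u0 :: cvec
  acc :: "2 set"

definition valid_mcqfa :: "mcqfa \<Rightarrow> bool" where
  "valid_mcqfa M \<longleftrightarrow> unitary2 (Ua M) \<and> unitary2 (Ub M) \<and> norm (u0 M) = 1"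

definition umat :: "mcqfa \<Rightarrow> gen \<Rightarrow> cmat" where
  "umat M g = (case g of GA \<Rightarrow> Ua M | GB \<Rightarrow> Ub M)"

definition final_state :: "mcqfa \<Rightarrow> pword \<Rightarrow> cvec" where
  "final_state M w = fold (\<lambda>g v. umat M g *v v) w (u0 M)"

definition accept_prob :: "mcqfa \<Rightarrow> pword \<Rightarrow> real" where
  "accept_prob M w = (\<Sum>i\<in>acc M. (cmod (final_state M w $ i))\<^sup>2)"

definition separates_exactly :: "mcqfa \<Rightarrow> pword \<Rightarrow> pword \<Rightarrow> bool" where
  "separates_exactly M x y \<longleftrightarrow>
     (accept_prob M x = 1 \<and> accept_prob M y = 0) \<or>
     (accept_prob M x = 0 \<and> accept_prob M y = 1)"

end

theory Submission
  imports Defs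
begin

text \<open>Write \<open>P\<^sub>w\<close> for the word map of the positive word \<open>w\<close>. The final state of an automaton
  on \<open>w\<close> is \<open>P\<^sub>w\<^sup>* u\<^sub>0\<close>, evaluated at the adjoints of \<open>U\<^sub>a, U\<^sub>b\<close>, so exact separation of \<open>x\<close> and
  \<open>y\<close> means \<open>\<langle>u\<^sub>0, P\<^sub>x P\<^sub>y\<^sup>* u\<^sub>0\<rangle> = 0\<close>, i.e. \<open>u\<^sub>0 \<perp> W u\<^sub>0\<close> for the value \<open>W\<close> of \<open>\<omega> = xy\<^sup>-\<^sup>1\<close>.
  After rescaling \<open>U\<^sub>a, U\<^sub>b\<close> into \<open>SU(2)\<close>, \<open>W\<close> lies in \<open>SU(2)\<close>, where \<open>u \<perp> W u\<close> for a unit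
  vector \<open>u\<close> forces \<open>tr W = 0\<close>, hence \<open>W\<^sup>2 = -1\<close>, and \<open>W\<close> is conjugate in \<open>SU(2)\<close> to \<open>diag(i,-i)\<close>.
  Since word maps commute with simultaneous conjugation, \<open>diag(i,-i)\<close> is a value of \<open>f\<^sub>\<omega>\<close>.
  Conversely, if \<open>P\<^sub>x P\<^sub>y\<^sup>* = diag(i,-i)\<close>, conjugating the generators by \<open>R\<^sup>* P\<^sub>y\<close> with a
  \<open>45\<degree>\<close> rotation \<open>R\<close> turns \<open>P\<^sub>y\<^sup>* P\<^sub>x\<close> into \<open>R\<^sup>* diag(i,-i) R\<close>, whose \<open>(1,1)\<close> entry vanishes,
  and starting in \<open>P\<^sub>x e\<^sub>1\<close> the automaton ends in \<open>e\<^sub>1\<close> on \<open>x\<close> and in \<open>e\<^sub>1\<^sup>\<perp>\<close> on \<open>y\<close>.\<close>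

lemma cmat_eq_iff:
  "(A::cmat) = B \<longleftrightarrow> A$1$1 = B$1$1 \<and> A$1$2 = B$1$2 \<and> A$2$1 = B$2$1 \<and> A$2$2 = B$2$2"
  by (auto simp: vec_eq_iff forall_2)

lemma cvec_eq_iff: "(u::cvec) = v \<longleftrightarrow> u$1 = v$1 \<and> u$2 = v$2"
  by (auto simp: vec_eq_iff forall_2)

lemma cmat_mult_entry [simp]: "((A::cmat) ** B)$i$j = A$i$1 * B$1$j + A$i$2 * B$2$j"
  by (simp add: matrix_matrix_mult_def sum_2)

lemma cmat_vector_mult_entry [simp]: "((A::cmat) *v v)$i = A$i$1 * v$1 + A$i$2 * v$2"
  by (simp add: matrix_vector_mult_def sum_2)

lemma cmat_mat_entry [simp]: "(mat k :: cmat)$i$j = (if i = j then k else 0)"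
  by (simp add: mat_def)

lemma adjoint_mat_entry [simp]: "adjoint_mat A $i$j = cnj (A$j$i)"
  by (simp add: adjoint_mat_def)

lemma diag_i_entry [simp]: "diag_i $i$j = (if i = j then (if i = 1 then \<i> else - \<i>) else 0)"
  by (simp add: diag_i_def)

definition mat2 :: "complex \<Rightarrow> complex \<Rightarrow> complex \<Rightarrow> complex \<Rightarrow> cmat" where
  "mat2 a b c d = (\<chi> i j. if i = 1 then (if j = 1 then a else b) else (if j = 1 then c else d))"

lemma mat2_entry [simp]:
  "mat2 a b c d $1$1 = a" "mat2 a b c d $1$2 = b" "mat2 a b c d $2$1 = c" "mat2 a b c d $2$2 = d"
  by (simp_all add: mat2_def)

lemma adjoint_mat_adjoint_mat [simp]: "adjoint_mat (adjoint_mat A) = A"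
  by (simp add: cmat_eq_iff)

lemma adjoint_mat_mult: "adjoint_mat ((A::cmat) ** B) = adjoint_mat B ** adjoint_mat A"
  by (simp add: cmat_eq_iff algebra_simps)

lemma adjoint_mat_mat [simp]: "adjoint_mat (mat c :: cmat) = mat (cnj c)"
  by (simp add: cmat_eq_iff)

lemma adjoint_mat_conj: "adjoint_mat (V ** A ** adjoint_mat V) = V ** adjoint_mat A ** adjoint_mat V"
  by (simp add: adjoint_mat_mult matrix_mul_assoc)

lemma det_adjoint_mat: "det (adjoint_mat (A::cmat)) = cnj (det A)"
  by (simp add: det_2)

lemma mat_mult_mat: "mat a ** (mat b :: cmat) = mat (a * b)"
  by (simp add: cmat_eq_iff)

lemma cmat_vector_mult_smult: "(A::cmat) *v (c *s v) = c *s (A *v v)"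
  by (simp add: cvec_eq_iff algebra_simps)

lemma mat_mult_adjoint_mat_mat_mult:
  "(mat a ** (A::cmat)) ** adjoint_mat (mat b ** (B::cmat)) = mat (a * cnj b) ** (A ** adjoint_mat B)"
  by (simp add: cmat_eq_iff algebra_simps)

section \<open>Unitary matrices and \<open>SU(2)\<close>\<close>

lemma unitary2_adjoint_mat: "unitary2 U \<Longrightarrow> unitary2 (adjoint_mat U)"
  by (simp add: unitary2_def)

lemma unitary2_one: "unitary2 (mat 1)"
  by (simp add: unitary2_def)

lemma unitary2_mult: "unitary2 A \<Longrightarrow> unitary2 B \<Longrightarrow> unitary2 (A ** B)"
  unfolding unitary2_def adjoint_mat_mult by (metis matrix_mul_assoc matrix_mul_rid)

lemma unitary2_conj: "unitary2 V \<Longrightarrow> unitary2 A \<Longrightarrow> unitary2 (V ** A ** adjoint_mat V)"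
  by (simp add: unitary2_mult unitary2_adjoint_mat)

lemma unitary2_cancel_right: "unitary2 U \<Longrightarrow> X ** U ** adjoint_mat U = X"
  by (metis matrix_mul_assoc matrix_mul_rid unitary2_def)

lemma unitary2_adjoint_cancel_right: "unitary2 U \<Longrightarrow> X ** adjoint_mat U ** U = X"
  by (metis matrix_mul_assoc matrix_mul_rid unitary2_def)

lemma unitary2_conj_mult:
  "unitary2 V \<Longrightarrow> (V ** A ** adjoint_mat V) ** (V ** B ** adjoint_mat V) = V ** (A ** B) ** adjoint_mat V"
  using unitary2_adjoint_cancel_right[of V "V ** A"] by (simp add: matrix_mul_assoc)

lemma matrix_inv_unitary2: assumes "unitary2 U" shows "matrix_inv U = adjoint_mat U"
  unfolding matrix_inv_def
proof (rule some_equality)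
  show "U ** adjoint_mat U = mat 1 \<and> adjoint_mat U ** U = mat 1"
    using assms by (simp add: unitary2_def)
  fix A assume A: "U ** A = mat 1 \<and> A ** U = mat 1"
  have "adjoint_mat U = adjoint_mat U ** (U ** A)" using A by simp
  also have "\<dots> = A" using assms by (simp add: matrix_mul_assoc unitary2_def)
  finally show "A = adjoint_mat U" by simp
qed

lemma SU2_unitary2: "U \<in> SU2 \<Longrightarrow> unitary2 U"
  by (simp add: SU2_def)

lemma SU2_one: "mat 1 \<in> SU2"
  by (simp add: SU2_def unitary2_def cmat_eq_iff det_I)

lemma SU2_mult: "A \<in> SU2 \<Longrightarrow> B \<in> SU2 \<Longrightarrow> A ** B \<in> SU2"
  by (simp add: SU2_def unitary2_mult det_mul)

lemma SU2_adjoint_mat: "A \<in> SU2 \<Longrightarrow> adjoint_mat A \<in> SU2"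
  by (simp add: SU2_def unitary2_adjoint_mat det_adjoint_mat)

lemma SU2_conj: "V \<in> SU2 \<Longrightarrow> A \<in> SU2 \<Longrightarrow> V ** A ** adjoint_mat V \<in> SU2"
  by (simp add: SU2_mult SU2_adjoint_mat)

text \<open>Divide by a square root of the determinant, which has modulus one.\<close>

lemma unitary2_eq_scalar_SU2:
  assumes "unitary2 U"
  shows "\<exists>a g. a \<noteq> 0 \<and> g \<in> SU2 \<and> U = mat a ** g"
proof -
  have "det (U ** adjoint_mat U) = 1" using assms by (simp add: unitary2_def det_I)
  then have "complex_of_real ((cmod (det U))\<^sup>2) = 1"
    by (simp add: det_mul det_adjoint_mat flip: complex_norm_square)
  then have "(cmod (det U))\<^sup>2 = 1" using of_real_eq_1_iff by blast
  then have "cmod (det U) = 1" using norm_ge_zero[of "det U"] by (auto simp: power2_eq_1_iff)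
  define a where "a = csqrt (det U)"
  have a_sq: "a\<^sup>2 = det U" by (simp add: a_def)
  with \<open>cmod (det U) = 1\<close> have "(cmod a)\<^sup>2 = 1" by (metis norm_power)
  then have a_cnj: "a * cnj a = 1" by (metis complex_norm_square of_real_1)
  define g where "g = mat (cnj a) ** U"
  have U: "U = mat a ** g"
    using a_cnj by (simp add: g_def matrix_mul_assoc mat_mult_mat)
  have "unitary2 (mat (cnj a))" using a_cnj by (simp add: unitary2_def mat_mult_mat mult.commute)
  then have g_unitary: "unitary2 g" using assms by (simp add: g_def unitary2_mult)
  have "cnj a * a = 1" using a_cnj by (simp add: mult.commute)
  have "det g = cnj a * cnj a * det U" unfolding g_def det_mul by (simp add: det_2)
  also have "\<dots> = (cnj a * a) * (cnj a * a)"
    by (simp flip: a_sq) (simp add: power2_eq_square algebra_simps)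
  also have "\<dots> = 1" using \<open>cnj a * a = 1\<close> by simp
  finally have "g \<in> SU2" using g_unitary by (simp add: SU2_def)
  moreover have "a \<noteq> 0" using a_cnj by auto
  ultimately show ?thesis using U by blast
qed

lemma SU2_entries:
  assumes "U \<in> SU2"
  shows "U$2$2 = cnj (U$1$1)" "U$1$2 = - cnj (U$2$1)"
proof -
  define J where "J = mat2 (U$2$2) (- U$1$2) (- U$2$1) (U$1$1)"
  have "det U = 1" and U_unitary: "adjoint_mat U ** U = mat 1"
    using assms by (auto simp: SU2_def unitary2_def)
  then have "U ** J = mat 1" by (simp add: J_def cmat_eq_iff det_2 algebra_simps)
  then have "adjoint_mat U = adjoint_mat U ** (U ** J)" by simp
  also have "\<dots> = J" using U_unitary by (simp add: matrix_mul_assoc)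
  finally have "adjoint_mat U $1$1 = J $1$1" "adjoint_mat U $2$1 = J $2$1" by simp_all
  then show "U$2$2 = cnj (U$1$1)" "U$1$2 = - cnj (U$2$1)"
    by (simp_all add: J_def) (metis complex_cnj_cnj complex_cnj_minus)
qed

lemma SU2_det_entries:
  assumes "U \<in> SU2"
  shows "U$1$1 * cnj (U$1$1) + U$2$1 * cnj (U$2$1) = 1"
  using assms SU2_entries[OF assms] by (simp add: SU2_def det_2 mult.commute)

definition gen_val :: "cmat \<Rightarrow> cmat \<Rightarrow> gen \<Rightarrow> cmat" where
  "gen_val g h c = (case c of GA \<Rightarrow> g | GB \<Rightarrow> h)"

lemma gen_val_unitary2: "unitary2 g \<Longrightarrow> unitary2 h \<Longrightarrow> unitary2 (gen_val g h c)"
  by (cases c) (simp_all add: gen_val_def)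

lemma gen_val_SU2: "g \<in> SU2 \<Longrightarrow> h \<in> SU2 \<Longrightarrow> gen_val g h c \<in> SU2"
  by (cases c) (simp_all add: gen_val_def)

lemma letter_val_unitary2_eq:
  "unitary2 g \<Longrightarrow> unitary2 h \<Longrightarrow>
    letter_val g h l = (if snd l then gen_val g h (fst l) else adjoint_mat (gen_val g h (fst l)))"
  by (cases "fst l") (simp_all add: letter_val_def gen_val_def matrix_inv_unitary2)

lemma letter_val_unitary2: "unitary2 g \<Longrightarrow> unitary2 h \<Longrightarrow> unitary2 (letter_val g h l)"
  by (simp add: letter_val_unitary2_eq gen_val_unitary2 unitary2_adjoint_mat)

lemma letter_val_SU2: "g \<in> SU2 \<Longrightarrow> h \<in> SU2 \<Longrightarrow> letter_val g h l \<in> SU2"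
  by (simp add: letter_val_unitary2_eq SU2_unitary2 gen_val_SU2 SU2_adjoint_mat)

lemma letter_val_inv_letter:
  "unitary2 g \<Longrightarrow> unitary2 h \<Longrightarrow> letter_val g h (inv_letter l) = adjoint_mat (letter_val g h l)"
  by (simp add: letter_val_unitary2_eq inv_letter_def)

lemma word_map_Nil [simp]: "word_map [] g h = mat 1"
  by (simp add: word_map_def)

lemma word_map_Cons [simp]: "word_map (l # w) g h = letter_val g h l ** word_map w g h"
  by (simp add: word_map_def)

lemma word_map_append: "word_map (u @ v) g h = word_map u g h ** word_map v g h"
  by (induction u) (simp_all add: matrix_mul_assoc)

lemma word_map_unitary2: "unitary2 g \<Longrightarrow> unitary2 h \<Longrightarrow> unitary2 (word_map w g h)"
  by (induction w) (simp_all add: unitary2_one unitary2_mult letter_val_unitary2)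

lemma word_map_SU2: "g \<in> SU2 \<Longrightarrow> h \<in> SU2 \<Longrightarrow> word_map w g h \<in> SU2"
  by (induction w) (simp_all add: SU2_one SU2_mult letter_val_SU2)

lemma word_map_f2_inv:
  assumes "unitary2 g" "unitary2 h"
  shows "word_map (f2_inv w) g h = adjoint_mat (word_map w g h)"
proof (induction w)
  case Nil then show ?case by (simp add: f2_inv_def)
next
  case (Cons l w)
  have "f2_inv (l # w) = f2_inv w @ [inv_letter l]" by (simp add: f2_inv_def)
  with Cons assms show ?case
    by (simp add: word_map_append letter_val_inv_letter adjoint_mat_mult)
qed

lemma word_map_cons_red:
  assumes "unitary2 g" "unitary2 h"
  shows "word_map (cons_red l w) g h = letter_val g h l ** word_map w g h"
proof (cases w)
  case (Cons m ms)
  have cancel: "letter_val g h l ** (adjoint_mat (letter_val g h l) ** X) = X" for X :: cmat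
    using letter_val_unitary2[OF assms, of l] by (simp add: matrix_mul_assoc unitary2_def)
  show ?thesis using Cons by (simp add: letter_val_inv_letter[OF assms] cancel)
qed simp

lemma word_map_reduce:
  assumes "unitary2 g" "unitary2 h"
  shows "word_map (reduce w) g h = word_map w g h"
  unfolding reduce_def by (induction w) (simp_all add: word_map_cons_red[OF assms])

lemma word_map_omega:
  assumes "unitary2 g" "unitary2 h"
  shows "word_map (omega x y) g h =
    word_map (embed_word x) g h ** adjoint_mat (word_map (embed_word y) g h)"
  by (simp add: omega_def f2_mult_def word_map_reduce[OF assms] word_map_append
      word_map_f2_inv[OF assms])

lemma word_map_conj:
  assumes V: "unitary2 V" and g: "unitary2 g" and h: "unitary2 h"
  shows "word_map w (V ** g ** adjoint_mat V) (V ** h ** adjoint_mat V) =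
    V ** word_map w g h ** adjoint_mat V"
proof (induction w)
  case Nil then show ?case using V by (simp add: unitary2_def)
next
  case (Cons l w)
  have "gen_val (V ** g ** adjoint_mat V) (V ** h ** adjoint_mat V) c =
      V ** gen_val g h c ** adjoint_mat V" for c
    by (cases c) (simp_all add: gen_val_def)
  then have "letter_val (V ** g ** adjoint_mat V) (V ** h ** adjoint_mat V) l =
      V ** letter_val g h l ** adjoint_mat V"
    by (simp add: letter_val_unitary2_eq[OF unitary2_conj[OF V g] unitary2_conj[OF V h]]
        letter_val_unitary2_eq[OF g h] adjoint_mat_conj)
  then show ?case using Cons by (simp add: unitary2_conj_mult[OF V])
qed

lemma word_map_embed_Cons [simp]:
  "word_map (embed_word (c # w)) g h = gen_val g h c ** word_map (embed_word w) g h"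
  by (cases c) (simp_all add: embed_word_def letter_val_def gen_val_def)

lemma word_map_embed_scalar:
  assumes "a \<noteq> 0" "b \<noteq> 0"
  shows "\<exists>k. k \<noteq> 0 \<and>
    word_map (embed_word w) (mat a ** g) (mat b ** h) = mat k ** word_map (embed_word w) g h"
proof (induction w)
  case Nil
  show ?case by (rule exI[of _ 1]) (simp add: embed_word_def)
next
  case (Cons c w)
  then obtain k where "k \<noteq> 0"
    and k: "word_map (embed_word w) (mat a ** g) (mat b ** h) = mat k ** word_map (embed_word w) g h"
    by blast
  have scalar: "mat s ** A ** (mat k ** B) = mat (s * k) ** (A ** B)" for s and A B :: cmat
    by (simp add: cmat_eq_iff algebra_simps)
  show ?case
  proof (cases c)
    case GA
    with k \<open>k \<noteq> 0\<close> assms scalar show ?thesis by (intro exI[of _ "a * k"]) (simp add: gen_val_def)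
  next
    case GB
    with k \<open>k \<noteq> 0\<close> assms scalar show ?thesis by (intro exI[of _ "b * k"]) (simp add: gen_val_def)
  qed
qed

definition cinner :: "cvec \<Rightarrow> cvec \<Rightarrow> complex" where
  "cinner u v = cnj (u$1) * v$1 + cnj (u$2) * v$2"

lemma cinner_adjoint_mat_left: "cinner (adjoint_mat A *v u) v = cinner u (A *v v)"
  by (simp add: cinner_def algebra_simps)

lemma cnj_cinner: "cnj (cinner u v) = cinner v u"
  by (simp add: cinner_def mult.commute)

lemma cinner_mat_mult: "cinner u ((mat c ** (A::cmat)) *v v) = c * cinner u (A *v v)"
  by (simp add: cinner_def algebra_simps)

lemma cnorm_square: "(norm (v::cvec))\<^sup>2 = (cmod (v$1))\<^sup>2 + (cmod (v$2))\<^sup>2"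
  by (simp add: norm_vec_def L2_set_def sum_2)

lemma cinner_self: "cinner v v = complex_of_real ((norm v)\<^sup>2)"
  unfolding cnorm_square of_real_add complex_norm_square cinner_def by (simp add: mult.commute)

lemma cinner_unitary2: "unitary2 U \<Longrightarrow> cinner (U *v u) (U *v v) = cinner u v"
  by (metis adjoint_mat_adjoint_mat cinner_adjoint_mat_left matrix_vector_mul_assoc
      matrix_vector_mul_lid unitary2_def)

lemma norm_unitary2:
  assumes "unitary2 U" shows "norm (U *v v) = norm v"
proof -
  have "complex_of_real ((norm (U *v v))\<^sup>2) = complex_of_real ((norm v)\<^sup>2)"
    using cinner_unitary2[OF assms, of v v] by (simp only: cinner_self)
  then show ?thesis by (simp only: of_real_eq_iff power2_eq_iff_nonneg norm_ge_zero)
qed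

section \<open>Traceless elements of \<open>SU(2)\<close>\<close>

lemma SU2_trace_zero_if_orthogonal:
  assumes W: "W \<in> SU2" and "cinner u u = 1" and "cinner u (W *v u) = 0"
  shows "cnj (W$1$1) = - W$1$1"
proof -
  have "(W$1$1 + cnj (W$1$1)) * cinner u u = cinner u (W *v u) + cnj (cinner u (W *v u))"
    by (simp add: cinner_def SU2_entries[OF W]) (simp add: algebra_simps)
  with assms show ?thesis by (simp add: eq_neg_iff_add_eq_0 add.commute)
qed

lemma SU2_square_eq_neg_one_if_trace_zero:
  assumes W: "W \<in> SU2" and "cnj (W$1$1) = - W$1$1"
  shows "W ** W = mat (-1)"
  using assms SU2_det_entries[OF W]
  by (simp add: cmat_eq_iff SU2_entries[OF W]) (simp add: algebra_simps)

definition SU2_of_column :: "cvec \<Rightarrow> cmat" where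
  "SU2_of_column s = mat2 (s$1) (- cnj (s$2)) (s$2) (cnj (s$1))"

lemma SU2_of_column_SU2:
  assumes "cinner s s = 1"
  shows "SU2_of_column s \<in> SU2"
proof -
  have "s$1 * cnj (s$1) + s$2 * cnj (s$2) = 1"
    using assms by (simp add: cinner_def mult.commute)
  then show ?thesis
    by (simp add: SU2_def unitary2_def SU2_of_column_def cmat_eq_iff det_2 algebra_simps)
qed

text \<open>Elements of \<open>SU(2)\<close> commute with the antilinear map \<open>(s\<^sub>1, s\<^sub>2) \<mapsto> (-s\<^sub>2\<^sup>*, s\<^sub>1\<^sup>*)\<close>, so an
  eigenvector for \<open>i\<close> yields one for \<open>-i\<close>.\<close>

lemma SU2_of_column_eigenvector:
  assumes W: "W \<in> SU2" and s: "W *v s = \<i> *s s"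
  shows "W ** SU2_of_column s = SU2_of_column s ** diag_i"
proof -
  let ?V = "SU2_of_column s"
  have Ws: "(W *v s)$1 = \<i> * s$1" "(W *v s)$2 = \<i> * s$2" using s by simp_all
  have "(W ** ?V)$1$1 = (W *v s)$1" "(W ** ?V)$2$1 = (W *v s)$2"
    "(W ** ?V)$1$2 = - cnj ((W *v s)$2)" "(W ** ?V)$2$2 = cnj ((W *v s)$1)"
    by (simp_all add: SU2_of_column_def SU2_entries[OF W] algebra_simps)
  note entries = this
  show ?thesis
    unfolding cmat_eq_iff entries Ws by (simp add: SU2_of_column_def)
qed

text \<open>Since \<open>W\<^sup>2 = -1\<close>, the vector \<open>(u - i W u)/\<surd>2\<close> is a unit eigenvector of \<open>W\<close> for \<open>i\<close>.\<close>

lemma SU2_conj_diag_i_if_orthogonal: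
  assumes W: "W \<in> SU2" and u: "cinner u u = 1" and uWu: "cinner u (W *v u) = 0"
  shows "\<exists>V\<in>SU2. V ** W ** adjoint_mat V = diag_i"
proof -
  have WW: "W ** W = mat (-1)"
    using SU2_square_eq_neg_one_if_trace_zero[OF W SU2_trace_zero_if_orthogonal[OF assms]] .
  define c :: complex where "c = of_real (1 / sqrt 2)"
  have c: "cnj c = c" "c * c = 1/2" by (simp_all add: c_def flip: of_real_mult)
  define w where "w = W *v u"
  define s where "s = c *s (u - \<i> *s w)"
  have "W *v w = - u" using WW by (simp add: w_def matrix_vector_mul_assoc cvec_eq_iff)
  then have Ws: "W *v s = \<i> *s s"
    by (simp add: s_def cmat_vector_mult_smult matrix_vector_mult_diff_distrib flip: w_def)
      (simp add: cvec_eq_iff algebra_simps)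
  have "cinner w w = 1" using u W by (simp add: w_def cinner_unitary2 SU2_unitary2)
  moreover have "cinner w u = 0" using uWu cnj_cinner[of u w] by (simp add: w_def)
  moreover have "cinner s s = c * c * (cinner u u + cinner w w - \<i> * cinner u w + \<i> * cinner w u)"
    by (simp add: cinner_def s_def c(1)) (simp add: algebra_simps)
  ultimately have s_unit: "cinner s s = 1" using u uWu c(2) by (simp add: w_def)
  let ?V = "SU2_of_column s"
  have "adjoint_mat ?V ** W ** ?V = diag_i"
    using SU2_of_column_eigenvector[OF W Ws] SU2_unitary2[OF SU2_of_column_SU2[OF s_unit]]
    unfolding unitary2_def
    by (metis matrix_mul_assoc matrix_mul_lid)
  with SU2_of_column_SU2[OF s_unit] show ?thesis
    by (intro bexI[of _ "adjoint_mat ?V"]) (simp_all add: SU2_adjoint_mat)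
qed

lemma final_state_eq_word_map:
  "final_state M w =
    adjoint_mat (word_map (embed_word w) (adjoint_mat (Ua M)) (adjoint_mat (Ub M))) *v u0 M"
proof -
  have "fold (\<lambda>c v. umat M c *v v) w u =
      adjoint_mat (word_map (embed_word w) (adjoint_mat (Ua M)) (adjoint_mat (Ub M))) *v u" for u
  proof (induction w arbitrary: u)
    case (Cons c w)
    have "gen_val (adjoint_mat (Ua M)) (adjoint_mat (Ub M)) c = adjoint_mat (umat M c)"
      by (cases c) (simp_all add: gen_val_def umat_def)
    with Cons show ?case by (simp add: adjoint_mat_mult matrix_vector_mul_assoc)
  qed (simp add: embed_word_def)
  then show ?thesis by (simp add: final_state_def)
qed

lemma norm_final_state: "valid_mcqfa M \<Longrightarrow> norm (final_state M w) = 1"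
  by (simp add: final_state_eq_word_map valid_mcqfa_def norm_unitary2 unitary2_adjoint_mat
      word_map_unitary2)

text \<open>A state accepted with probability one is supported on the accepting coordinates, a state
  accepted with probability zero on the others.\<close>

lemma cinner_eq_0_if_accept_one_zero:
  fixes f g :: cvec and A :: "2 set"
  assumes "norm f = 1" and f: "(\<Sum>i\<in>A. (cmod (f$i))\<^sup>2) = 1" and g: "(\<Sum>i\<in>A. (cmod (g$i))\<^sup>2) = 0"
  shows "cinner f g = 0"
proof -
  have "(\<Sum>i\<in>UNIV. (cmod (f$i))\<^sup>2) = 1"
    using assms(1) cnorm_square[of f] by (simp add: sum_2)
  moreover have "(\<Sum>i\<in>UNIV. (cmod (f$i))\<^sup>2) =
      (\<Sum>i\<in>UNIV - A. (cmod (f$i))\<^sup>2) + (\<Sum>i\<in>A. (cmod (f$i))\<^sup>2)"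
    by (rule sum.subset_diff) auto
  ultimately have "(\<Sum>i\<in>UNIV - A. (cmod (f$i))\<^sup>2) = 0" using f by simp
  then have "i \<notin> A \<Longrightarrow> f$i = 0" for i by (subst (asm) sum_nonneg_eq_0_iff) auto
  moreover have "i \<in> A \<Longrightarrow> g$i = 0" for i using g by (subst (asm) sum_nonneg_eq_0_iff) auto
  ultimately have "cnj (f$i) * g$i = 0" for i by (cases "i \<in> A") auto
  then show ?thesis unfolding cinner_def by (metis add_0)
qed

lemma separates_exactly_imp_orthogonal:
  assumes "valid_mcqfa M" "separates_exactly M x y"
  shows "cinner (final_state M x) (final_state M y) = 0"
  using assms(2) cinner_eq_0_if_accept_one_zero[OF norm_final_state[OF assms(1)], of x "acc M"]
    cinner_eq_0_if_accept_one_zero[OF norm_final_state[OF assms(1)], of y "acc M"]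
    cnj_cinner[of "final_state M y" "final_state M x"]
  unfolding separates_exactly_def accept_prob_def by auto

lemma diag_i_word_map_if_separates:
  assumes M: "valid_mcqfa M" and sep: "separates_exactly M x y"
  shows "diag_i \<in> (\<lambda>(g, h). word_map (omega x y) g h) ` (SU2 \<times> SU2)"
proof -
  obtain \<alpha> g \<beta> h where "\<alpha> \<noteq> 0" "\<beta> \<noteq> 0" and g: "g \<in> SU2" and h: "h \<in> SU2"
    and Ua: "adjoint_mat (Ua M) = mat \<alpha> ** g" and Ub: "adjoint_mat (Ub M) = mat \<beta> ** h"
    using M unitary2_eq_scalar_SU2 unitary2_adjoint_mat unfolding valid_mcqfa_def by metis
  obtain kx ky where "kx \<noteq> 0" "ky \<noteq> 0"
    and kx: "word_map (embed_word x) (mat \<alpha> ** g) (mat \<beta> ** h) = mat kx ** word_map (embed_word x) g h"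
    and ky: "word_map (embed_word y) (mat \<alpha> ** g) (mat \<beta> ** h) = mat ky ** word_map (embed_word y) g h"
    using word_map_embed_scalar[OF \<open>\<alpha> \<noteq> 0\<close> \<open>\<beta> \<noteq> 0\<close>] by metis
  define W where "W = word_map (omega x y) g h"
  let ?u = "u0 M"
  have "0 = cinner (final_state M x) (final_state M y)"
    using separates_exactly_imp_orthogonal[OF M sep] by simp
  also have "\<dots> = cinner ?u ((mat kx ** word_map (embed_word x) g h) **
      adjoint_mat (mat ky ** word_map (embed_word y) g h) *v ?u)"
    by (simp add: final_state_eq_word_map Ua Ub kx ky cinner_adjoint_mat_left
        matrix_vector_mul_assoc)
  also have "\<dots> = kx * cnj ky * cinner ?u (W *v ?u)"
    by (simp add: mat_mult_adjoint_mat_mat_mult cinner_mat_mult W_def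
        word_map_omega[OF SU2_unitary2[OF g] SU2_unitary2[OF h]])
  finally have "cinner ?u (W *v ?u) = 0" using \<open>kx \<noteq> 0\<close> \<open>ky \<noteq> 0\<close> by simp
  moreover have "cinner ?u ?u = 1" using M by (simp add: cinner_self valid_mcqfa_def)
  moreover have "W \<in> SU2" using g h by (simp add: W_def word_map_SU2)
  ultimately obtain V where V: "V \<in> SU2" and VW: "V ** W ** adjoint_mat V = diag_i"
    using SU2_conj_diag_i_if_orthogonal by blast
  have "word_map (omega x y) (V ** g ** adjoint_mat V) (V ** h ** adjoint_mat V) = diag_i"
    using VW by (simp add: word_map_conj SU2_unitary2 V g h W_def)
  moreover have "V ** g ** adjoint_mat V \<in> SU2" "V ** h ** adjoint_mat V \<in> SU2"
    using V g h by (simp_all add: SU2_conj)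
  ultimately show ?thesis by force
qed

lemma separates_if_word_map_entry_zero:
  assumes g: "unitary2 g" and h: "unitary2 h"
    and zero: "(adjoint_mat (word_map (embed_word y) g h) ** word_map (embed_word x) g h)$1$1 = 0"
  shows "\<exists>M. valid_mcqfa M \<and> separates_exactly M x y"
proof -
  define Px where "Px = word_map (embed_word x) g h"
  define Py where "Py = word_map (embed_word y) g h"
  define e\<^sub>1 :: cvec where "e\<^sub>1 = axis 1 1"
  have e\<^sub>1: "e\<^sub>1$1 = 1" "e\<^sub>1$2 = 0" by (simp_all add: e\<^sub>1_def axis_def)
  then have "norm e\<^sub>1 = 1"
    using cnorm_square[of e\<^sub>1] norm_ge_zero[of e\<^sub>1] by (auto simp: power2_eq_1_iff)
  define M where "M = \<lparr>Ua = adjoint_mat g, Ub = adjoint_mat h, u0 = Px *v e\<^sub>1, acc = {1}\<rparr>"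
  have "unitary2 Px" using g h by (simp add: Px_def word_map_unitary2)
  then have "valid_mcqfa M" "final_state M x = e\<^sub>1"
    using g h \<open>norm e\<^sub>1 = 1\<close>
    by (simp_all add: M_def valid_mcqfa_def unitary2_adjoint_mat norm_unitary2
        final_state_eq_word_map matrix_vector_mul_assoc unitary2_def flip: Px_def)
  moreover have "final_state M y = (adjoint_mat Py ** Px) *v e\<^sub>1"
    by (simp add: M_def final_state_eq_word_map matrix_vector_mul_assoc flip: Px_def Py_def)
  ultimately show ?thesis
    using zero by (auto simp: separates_exactly_def accept_prob_def M_def e\<^sub>1 Px_def Py_def)
qed

text \<open>\<open>R\<close> is the rotation by \<open>45\<degree>\<close>; the \<open>(1,1)\<close> entry of \<open>R\<^sup>* diag(i,-i) R\<close> is \<open>(i - i)/2 = 0\<close>.\<close>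

lemma separates_if_diag_i_word_map:
  assumes "diag_i \<in> (\<lambda>(g, h). word_map (omega x y) g h) ` (SU2 \<times> SU2)"
  shows "\<exists>M. valid_mcqfa M \<and> separates_exactly M x y"
proof -
  obtain g h where "g \<in> SU2" "h \<in> SU2" and gh: "word_map (omega x y) g h = diag_i"
    using assms by auto
  then have g: "unitary2 g" and h: "unitary2 h" by (simp_all add: SU2_unitary2)
  define Px where "Px = word_map (embed_word x) g h"
  define Py where "Py = word_map (embed_word y) g h"
  have Py: "unitary2 Py" using g h by (simp add: Py_def word_map_unitary2)
  have "Px ** adjoint_mat Py = diag_i" using gh by (simp add: word_map_omega[OF g h] Px_def Py_def)
  then have Px: "Px = diag_i ** Py" using unitary2_adjoint_cancel_right[OF Py, of Px] by simp
  define c :: complex where "c = of_real (1 / sqrt 2)"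
  have c: "cnj c = c" "c * c = 1/2" by (simp_all add: c_def flip: of_real_mult)
  define R where "R = mat2 c (- c) c c"
  have R: "unitary2 R" using c by (simp add: unitary2_def R_def cmat_eq_iff mult.commute)
  define V where "V = adjoint_mat R ** Py"
  have V: "unitary2 V" using R Py by (simp add: V_def unitary2_mult unitary2_adjoint_mat)
  have "adjoint_mat (word_map (embed_word y) (V ** g ** adjoint_mat V) (V ** h ** adjoint_mat V)) **
      word_map (embed_word x) (V ** g ** adjoint_mat V) (V ** h ** adjoint_mat V) =
      V ** (adjoint_mat Py ** (diag_i ** Py)) ** adjoint_mat V"
    by (simp add: word_map_conj[OF V g h] adjoint_mat_conj unitary2_conj_mult[OF V] Px
        flip: Px_def Py_def)
  also have "\<dots> = adjoint_mat R ** diag_i ** R"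
    by (simp add: V_def adjoint_mat_mult matrix_mul_assoc unitary2_cancel_right[OF Py])
  finally have conj_eq: "adjoint_mat (word_map (embed_word y) (V ** g ** adjoint_mat V) (V ** h ** adjoint_mat V)) **
      word_map (embed_word x) (V ** g ** adjoint_mat V) (V ** h ** adjoint_mat V) =
      adjoint_mat R ** diag_i ** R" .
  have "(adjoint_mat R ** diag_i ** R)$1$1 = 0" by (simp add: R_def c(1))
  then show ?thesis
    by (intro separates_if_word_map_entry_zero[OF unitary2_conj[OF V g] unitary2_conj[OF V h]])
      (simp only: conj_eq)
qed

theorem fact1:
  fixes x y :: pword
  assumes "x \<noteq> y"
  shows "(\<exists>M. valid_mcqfa M \<and> separates_exactly M x y) \<longleftrightarrow>
         diag_i \<in> (\<lambda>(g, h). word_map (omega x y) g h) ` (SU2 \<times> SU2)"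
  using diag_i_word_map_if_separates separates_if_diag_i_word_map by blast

end
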